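(* Let $\beta\in[1/2,1)$ and $0<\omega<\delta<1$ be fixed constants with $\omega/(1-\beta)<\delta$. Under the alternative, $\theta=\mathbf{1}_n$, $N=n^{1-\beta}$, $a=n^{-\omega}$, $c=n^{-\delta}$, $b=(c(n-N)-aN)/(n-2N)$, and the memberships are random: $X_i$ i.i.d. $\mathrm{Bernoulli}(N/n)$, with $\mathbb{P}(A_{ij}=1)=a$ if $X_i=X_j=1$, $c$ if $X_i=X_j=0$, $b$ otherwise (independently over $i<j$ given $X$). Under the null, $A$ is an Erdős–Rényi graph with edge probability $\alpha=a(N/n)+b(1-N/n)$. Let $v,e$ be fixed positive integers with $e\le v(v-1)/2$ and $\omega/(1-\beta)<v/e<\delta$. Then the economic scan test with parameters $(v,e)$ has type-I plus type-II error tending to $0$ as $n\to\infty$.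
   Context: $A$ is the symmetric zero-diagonal adjacency matrix. Economic scan statistic: $\phi^{(v)}_{EST}=\max_{S\subset\{1,\dots,n\},\,|S|\le v}\#\{\{i,j\}\subset S: i\ne j,\ A_{ij}=1\}$ (the maximum number of edges induced on a set of at most $v$ nodes); the EST rejects the null iff $\phi^{(v)}_{EST}\ge e$. *)

theory Defs
  imports "HOL-Probability.Probability"
begin

text \<open>Vertices are 0,...,n-1. A random graph is a random function on the
  index pairs (i,j) with i<j<n; the symmetric zero-diagonal adjacency matrix
  is obtained by symmetrisation.\<close>

definition pairs :: "nat \<Rightarrow> (nat \<times> nat) set" where
  "pairs n = {(i, j). i < j \<and> j < n}"

definition adj :: "(nat \<times> nat \<Rightarrow> bool) \<Rightarrow> nat \<Rightarrow> nat \<Rightarrow> bool" where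
  "adj E i j = (if i < j then E (i, j) else if j < i then E (j, i) else False)"

definition est_stat :: "nat \<Rightarrow> nat \<Rightarrow> (nat \<Rightarrow> nat \<Rightarrow> bool) \<Rightarrow> nat" where
  "est_stat n v A = Max {card {{i, j} | i j. i \<in> S \<and> j \<in> S \<and> i \<noteq> j \<and> A i j} | S.
                          S \<subseteq> {..<n} \<and> card S \<le> v}"

definition est_rejects :: "nat \<Rightarrow> nat \<Rightarrow> nat \<Rightarrow> (nat \<Rightarrow> nat \<Rightarrow> bool) \<Rightarrow> bool" where
  "est_rejects n v e A \<longleftrightarrow> est_stat n v A \<ge> e"

definition Npar :: "real \<Rightarrow> nat \<Rightarrow> real" where
  "Npar \<beta> n = real n powr (1 - \<beta>)"
definition apar :: "real \<Rightarrow> nat \<Rightarrow> real" where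
  "apar \<omega> n = real n powr (- \<omega>)"
definition cpar :: "real \<Rightarrow> nat \<Rightarrow> real" where
  "cpar \<delta> n = real n powr (- \<delta>)"
definition bpar :: "real \<Rightarrow> real \<Rightarrow> real \<Rightarrow> nat \<Rightarrow> real" where
  "bpar \<beta> \<omega> \<delta> n = (cpar \<delta> n * (real n - Npar \<beta> n) - apar \<omega> n * Npar \<beta> n)
                      / (real n - 2 * Npar \<beta> n)"
definition alphapar :: "real \<Rightarrow> real \<Rightarrow> real \<Rightarrow> nat \<Rightarrow> real" where
  "alphapar \<beta> \<omega> \<delta> n = apar \<omega> n * (Npar \<beta> n / real n)
                         + bpar \<beta> \<omega> \<delta> n * (1 - Npar \<beta> n / real n)"

definition null_graph :: "real \<Rightarrow> real \<Rightarrow> real \<Rightarrow> nat \<Rightarrow> (nat \<times> nat \<Rightarrow> bool) pmf" where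
  "null_graph \<beta> \<omega> \<delta> n = Pi_pmf (pairs n) False (\<lambda>_. bernoulli_pmf (alphapar \<beta> \<omega> \<delta> n))"

text \<open>Alternative model (theta = all-ones): i.i.d. Bernoulli(N/n) memberships,
  then independent edges with probabilities a / c / b.\<close>
definition edge_prob :: "real \<Rightarrow> real \<Rightarrow> real \<Rightarrow> nat \<Rightarrow> (nat \<Rightarrow> bool) \<Rightarrow> nat \<Rightarrow> nat \<Rightarrow> real" where
  "edge_prob \<beta> \<omega> \<delta> n X i j =
     (if X i \<and> X j then apar \<omega> n
      else if \<not> X i \<and> \<not> X j then cpar \<delta> n
      else bpar \<beta> \<omega> \<delta> n)"

definition alt_graph :: "real \<Rightarrow> real \<Rightarrow> real \<Rightarrow> nat \<Rightarrow> (nat \<times> nat \<Rightarrow> bool) pmf" where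
  "alt_graph \<beta> \<omega> \<delta> n =
     do { X \<leftarrow> Pi_pmf {..<n} False (\<lambda>_. bernoulli_pmf (Npar \<beta> n / real n));
          Pi_pmf (pairs n) False (\<lambda>(i, j). bernoulli_pmf (edge_prob \<beta> \<omega> \<delta> n X i j)) }"

definition typeI_err :: "real \<Rightarrow> real \<Rightarrow> real \<Rightarrow> nat \<Rightarrow> nat \<Rightarrow> nat \<Rightarrow> real" where
  "typeI_err \<beta> \<omega> \<delta> v e n =
     measure_pmf.prob (null_graph \<beta> \<omega> \<delta> n) {E. est_rejects n v e (adj E)}"

definition typeII_err :: "real \<Rightarrow> real \<Rightarrow> real \<Rightarrow> nat \<Rightarrow> nat \<Rightarrow> nat \<Rightarrow> real" where
  "typeII_err \<beta> \<omega> \<delta> v e n =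
     measure_pmf.prob (alt_graph \<beta> \<omega> \<delta> n) {E. \<not> est_rejects n v e (adj E)}"

end

theory Submission
  imports Defs
begin

text \<open>
  Type I error: the statistic reaches \<open>e\<close> only if some set of at most \<open>v\<close> vertices spans
  \<open>e\<close> edges. A union bound over the at most \<open>(v + 1) n^v 2^(v^2)\<close> choices of such a vertex
  set and \<open>e\<close> of its pairs bounds the error by a constant times \<open>n^v \<alpha>^e\<close>, and
  \<open>\<alpha> \<le> 2 n^(-\<delta>)\<close> with \<open>v < \<delta> e\<close>.

  Type II error: fix a balanced graph \<open>H\<close> with \<open>v\<close> vertices and \<open>e\<close> edges, i.e. one in which
  every set of \<open>t\<close> vertices spans at most \<open>e t / v\<close> edges. Cut the vertices into \<open>v\<close> blocks of
  \<open>m = n div v\<close> and consider the \<open>m^v\<close> copies of \<open>H\<close> taking their \<open>i\<close>-th vertex from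
  block \<open>i\<close>; a copy is planted if its vertices lie in the community and its edges are present,
  which happens with probability \<open>q^v a^e\<close>, \<open>q = N/n\<close>. Two copies sharing \<open>t\<close> vertices share
  at most \<open>e t / v\<close> edges, so the second moment method bounds the probability that no copy is
  planted by \<open>((x + m - 1) / m)^v - 1\<close> with \<open>x = q\<^sup>-\<^sup>1 a^(-e/v) = n^(\<beta> + \<omega> e / v)\<close>. This tends
  to 0 because \<open>\<beta> + \<omega> e / v < 1\<close>, which is the hypothesis \<open>\<omega> / (1 - \<beta>) < v / e\<close>.

  Balanced graphs with \<open>v < e \<le> v(v - 1)/2\<close> exist: delete a matching from the complete graph
  when \<open>e\<close> is close to \<open>v(v - 1)/2\<close>; otherwise write \<open>e = k v + r\<close> and join each \<open>x\<close> to
  \<open>x + 1, \<dots>, x + k\<close> modulo \<open>v\<close>, and additionally to \<open>x + k + 1\<close> for \<open>x\<close> in a Beatty set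
  of size \<open>r\<close>.
\<close>

section \<open>Balanced graphs\<close>

definition balanced :: "(nat \<times> nat) set \<Rightarrow> nat \<Rightarrow> nat \<Rightarrow> bool" where
  "balanced T v e \<longleftrightarrow> T \<subseteq> {(x, y). x < y \<and> y < v} \<and> card T = e \<and>
     (\<forall>U \<subseteq> {..<v}. card {p \<in> T. fst p \<in> U \<and> snd p \<in> U} * v \<le> e * card U)"

lemma card_less_pairs:
  fixes U :: "nat set"
  assumes "finite U"
  shows "2 * card {(x, y). x \<in> U \<and> y \<in> U \<and> x < y} = card U * (card U - 1)"
proof -
  let ?L = "{(x, y). x \<in> U \<and> y \<in> U \<and> x < y}"
  let ?G = "{(x, y). x \<in> U \<and> y \<in> U \<and> y < x}"
  have fin: "finite ?L" "finite ?G"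
    by (rule finite_subset[of _ "U \<times> U"], auto simp: assms)+
  have "?G = (\<lambda>(x, y). (y, x)) ` ?L" by (auto simp: image_iff)
  hence card_G: "card ?G = card ?L" by (simp add: card_image inj_on_def)
  have "U \<times> U - (\<lambda>x. (x, x)) ` U = ?L \<union> ?G" by auto
  moreover have "card (U \<times> U - (\<lambda>x. (x, x)) ` U) = card U * card U - card U"
    by (subst card_Diff_subset) (auto simp: assms card_image inj_on_def card_cartesian_product)
  moreover have "card (?L \<union> ?G) = card ?L + card ?G"
    by (rule card_Un_disjoint) (use fin in auto)
  ultimately show ?thesis using card_G by (simp add: diff_mult_distrib2)
qed

lemma balanced_exists_dense:
  assumes dense: "v * (v - 1) div 2 \<le> e + v div 2" and e: "e \<le> v * (v - 1) div 2"
  shows "\<exists>T. balanced T v e"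
proof -
  define m where "m = v * (v - 1) div 2 - e"
  define K where "K = {(x, y). x \<in> {..<v} \<and> y \<in> {..<v} \<and> x < y}"
  define matching where "matching = (\<lambda>i. (2 * i, 2 * i + 1)) ` {..<m}"
  have even: "2 * (v * (v - 1) div 2) = v * (v - 1)" by (cases "even v") auto
  have card_K: "card K = v * (v - 1) div 2"
    using card_less_pairs[of "{..<v}"] unfolding K_def by simp
  have fin_K: "finite K" unfolding K_def by (rule finite_subset[of _ "{..<v} \<times> {..<v}"]) auto
  have "2 * m \<le> v" using dense unfolding m_def by linarith
  hence "matching \<subseteq> K" unfolding matching_def K_def by auto
  moreover have "card matching = m" unfolding matching_def by (simp add: card_image inj_on_def)
  ultimately have card_T: "card (K - matching) = e"
    using card_K e fin_K by (simp add: card_Diff_subset finite_subset m_def)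
  have T_sub: "K - matching \<subseteq> {(x, y). x < y \<and> y < v}" unfolding K_def by auto
  have "2 * e \<ge> v * (v - 2)"
  proof -
    have "2 * e \<ge> v * (v - 1) - v" using dense even by linarith
    thus ?thesis by (simp add: diff_mult_distrib2)
  qed
  have "card {p \<in> K - matching. fst p \<in> U \<and> snd p \<in> U} * v \<le> e * card U"
    if U: "U \<subseteq> {..<v}" for U
  proof (cases "U = {..<v}")
    case True
    hence "{p \<in> K - matching. fst p \<in> U \<and> snd p \<in> U} = K - matching" using T_sub by auto
    thus ?thesis using card_T True by simp
  next
    case False
    define u where "u = card U"
    have fin_U: "finite U" using U finite_subset by blast
    have "u < v" using U False unfolding u_def
      by (metis card_lessThan finite_lessThan psubsetI psubset_card_mono)
    have "card {p \<in> K - matching. fst p \<in> U \<and> snd p \<in> U} \<le> card {(x, y). x \<in> U \<and> y \<in> U \<and> x < y}"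
      by (rule card_mono, rule finite_subset[of _ "U \<times> U"]) (use T_sub fin_U in auto)
    hence "2 * card {p \<in> K - matching. fst p \<in> U \<and> snd p \<in> U} * v \<le> u * (u - 1) * v"
      using card_less_pairs[OF fin_U] unfolding u_def by simp
    also have "\<dots> \<le> u * (v - 2) * v" using \<open>u < v\<close> by (intro mult_le_mono) auto
    also have "\<dots> \<le> u * (2 * e)" using \<open>2 * e \<ge> v * (v - 2)\<close> by (simp add: mult.assoc mult.commute)
    finally show ?thesis unfolding u_def by (simp add: mult.commute)
  qed
  thus ?thesis using T_sub card_T unfolding balanced_def by blast
qed

lemma card_strict_increases:
  fixes f :: "nat \<Rightarrow> nat"
  assumes mono: "\<And>x. f x \<le> f (Suc x)" and step: "\<And>x. f (Suc x) \<le> Suc (f x)"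
  shows "card {x. x < n \<and> f x < f (Suc x)} = f n - f 0"
proof (induction n)
  case 0
  then show ?case by simp
next
  case (Suc n)
  have "f 0 \<le> f n" by (induction n) (auto intro: le_trans[OF _ mono])
  show ?case
  proof (cases "f n < f (Suc n)")
    case True
    hence "{x. x < Suc n \<and> f x < f (Suc x)} = insert n {x. x < n \<and> f x < f (Suc x)}" by auto
    then show ?thesis using Suc True step[of n] \<open>f 0 \<le> f n\<close> by simp
  next
    case False
    hence "{x. x < Suc n \<and> f x < f (Suc x)} = {x. x < n \<and> f x < f (Suc x)}"
      using less_Suc_eq by auto
    then show ?thesis using Suc False mono[of n] by simp
  qed
qed

locale circulant =
  fixes v k r :: nat
  assumes k_pos: "1 \<le> k" and k_small: "2 * k + 2 < v" and r_less: "r < v"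
begin

definition shift :: "nat \<Rightarrow> nat \<Rightarrow> nat" where
  "shift d x = (if x + d < v then x + d else x + d - v)"

definition prev :: "nat \<Rightarrow> nat" where
  "prev x = (if x = 0 then v - 1 else x - 1)"

definition beatty :: "nat set" where
  "beatty = {x. x < v \<and> x * r div v < Suc x * r div v}"

definition arcs :: "(nat \<times> nat) set" where
  "arcs = {..<v} \<times> {1..k} \<union> beatty \<times> {Suc k}"

definition edge :: "nat \<times> nat \<Rightarrow> nat \<times> nat" where
  "edge p = (min (fst p) (shift (snd p) (fst p)), max (fst p) (shift (snd p) (fst p)))"

lemma Suc_mult_div_le: "Suc x * r div v \<le> Suc (x * r div v)"
proof -
  have "Suc x * r div v \<le> (x * r + v) div v" by (rule div_le_mono) (use r_less in simp)
  also have "\<dots> = Suc (x * r div v)" using r_less by simp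
  finally show ?thesis .
qed

lemma card_beatty: "card beatty = r"
proof -
  have "card beatty = v * r div v - 0 * r div v"
    unfolding beatty_def
  proof (rule card_strict_increases)
    show "x * r div v \<le> Suc x * r div v" for x by (simp add: div_le_mono)
  qed (rule Suc_mult_div_le)
  thus ?thesis using r_less by simp
qed

lemma beatty_subset: "beatty \<subseteq> {..<v}"
  unfolding beatty_def by auto

lemma arcs_bounds: "p \<in> arcs \<Longrightarrow> fst p < v \<and> 1 \<le> snd p \<and> snd p \<le> Suc k"
  unfolding arcs_def beatty_def by auto

lemma edge_arcs_subset: "edge ` arcs \<subseteq> {(x, y). x < y \<and> y < v}"
proof
  fix q assume "q \<in> edge ` arcs"
  then obtain x d where p: "(x, d) \<in> arcs" and q: "q = edge (x, d)" by auto
  have b: "x < v" "1 \<le> d" "d \<le> Suc k" using arcs_bounds[OF p] by auto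
  hence "shift d x \<noteq> x" "shift d x < v" using k_small unfolding shift_def by auto
  thus "q \<in> {(x, y). x < y \<and> y < v}" using q b unfolding edge_def by auto
qed

lemma inj_on_edge: "inj_on edge arcs"
proof (rule inj_onI)
  fix p p' assume p: "p \<in> arcs" and p': "p' \<in> arcs" and eq: "edge p = edge p'"
  obtain x d x' d' where pe: "p = (x, d)" "p' = (x', d')" by (cases p, cases p')
  have b: "x < v" "1 \<le> d" "d \<le> Suc k" "x' < v" "1 \<le> d'" "d' \<le> Suc k"
    using arcs_bounds[OF p] arcs_bounds[OF p'] pe by auto
  have "(x = x' \<and> shift d x = shift d' x') \<or> (x = shift d' x' \<and> shift d x = x')"
    using eq pe unfolding edge_def by (auto simp: min_def max_def split: if_splits)
  moreover have "\<not> (x = shift d' x' \<and> shift d x = x')"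
    using b k_small unfolding shift_def by (auto split: if_splits)
  ultimately show "p = p'"
    using b k_small pe unfolding shift_def by (auto split: if_splits)
qed

lemma card_arcs: "card arcs = k * v + r"
proof -
  have "finite beatty" using beatty_subset finite_subset by blast
  hence "card arcs = card ({..<v} \<times> {1..k}) + card (beatty \<times> {Suc k})"
    unfolding arcs_def by (intro card_Un_disjoint) auto
  thus ?thesis by (simp add: card_cartesian_product card_beatty)
qed

definition weight :: "nat \<Rightarrow> real" where
  "weight x = 1 + real (Suc x * r div v) - real (Suc x * r) / real v"

lemma weight_bounds: "0 \<le> weight x" "weight x \<le> 1"
proof -
  have v: "real v > 0" using k_small by simp
  have a: "real (Suc x * r) = real v * real (Suc x * r div v) + real (Suc x * r mod v)"
    by (metis div_mult_mod_eq of_nat_add of_nat_mult mult.commute)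
  have "real (Suc x * r mod v) < real v" using k_small by simp
  thus "0 \<le> weight x" "weight x \<le> 1" using a v unfolding weight_def by (simp_all add: field_simps)
qed

lemma indicator_beatty_eq:
  assumes "x < v"
  shows "of_bool (x \<in> beatty) - real r / real v = weight x - weight (prev x)"
proof (cases x)
  case 0
  have "0 \<notin> beatty" unfolding beatty_def using r_less by simp
  moreover have "weight 0 = 1 - real r / real v" unfolding weight_def using r_less by simp
  moreover have "weight (v - 1) = 1" unfolding weight_def using k_small by simp
  ultimately show ?thesis using 0 unfolding prev_def by simp
next
  case (Suc y)
  have "of_bool (x \<in> beatty) = real (Suc x * r div v) - real (x * r div v)"
    using Suc_mult_div_le[of x] assms div_le_mono[of "x * r" "Suc x * r" v] unfolding beatty_def
    by (auto simp: of_nat_diff)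
  moreover have "real (Suc x * r) / real v - real (x * r) / real v = real r / real v"
    by (simp add: diff_divide_distrib[symmetric] algebra_simps)
  ultimately show ?thesis using Suc unfolding weight_def prev_def by simp
qed

lemma prev_shift: "x < v \<Longrightarrow> prev (shift 1 x) = x"
  unfolding prev_def shift_def by auto

lemma inj_on_prev: "inj_on prev {..<v}"
  unfolding prev_def inj_on_def using k_small by auto

text \<open>The Beatty set is spread evenly: the weights telescope along the cycle, so only the
  vertices of \<open>U\<close> whose successor leaves \<open>U\<close> contribute to the discrepancy.\<close>

lemma card_beatty_Int_le:
  assumes U: "U \<subseteq> {..<v}"
  shows "real (card (U \<inter> beatty)) - real r * real (card U) / real v
           \<le> real (card {x \<in> U. shift 1 x \<notin> U})"
proof -
  have fin: "finite U" "finite (prev ` U)" using U finite_subset by auto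
  have "real (card (U \<inter> beatty)) - real r * real (card U) / real v
          = (\<Sum>x\<in>U. of_bool (x \<in> beatty) - real r / real v)"
    using fin by (simp add: sum_subtractf Int_def)
  also have "\<dots> = (\<Sum>x\<in>U. weight x - weight (prev x))"
    using U by (intro sum.cong refl indicator_beatty_eq) auto
  also have "\<dots> = sum weight U - sum weight (prev ` U)"
    using sum.reindex[OF inj_on_subset[OF inj_on_prev U], of weight] by (simp add: sum_subtractf)
  also have "\<dots> \<le> sum weight (U - prev ` U)"
  proof -
    have "sum weight (U \<inter> prev ` U) \<le> sum weight (prev ` U)"
      by (rule sum_mono2) (use fin weight_bounds in auto)
    thus ?thesis using sum.Int_Diff[OF fin(1), of weight "prev ` U"] by simp
  qed
  also have "\<dots> \<le> real (card (U - prev ` U))"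
    using sum_mono[of "U - prev ` U" weight "\<lambda>_. 1"] weight_bounds by simp
  also have "\<dots> \<le> real (card {x \<in> U. shift 1 x \<notin> U})"
  proof -
    have "U - prev ` U \<subseteq> {x \<in> U. shift 1 x \<notin> U}"
      using U prev_shift by (force simp: image_iff)
    thus ?thesis by (simp add: card_mono fin)
  qed
  finally show ?thesis .
qed

lemma card_edges_within_le:
  assumes U: "U \<subseteq> {..<v}"
  shows "card {q \<in> edge ` arcs. fst q \<in> U \<and> snd q \<in> U}
           \<le> card U * (k - 1) + card {x \<in> U. shift 1 x \<in> U} + card (U \<inter> beatty)"
proof -
  have fin: "finite U" using U finite_subset by blast
  define Q where "Q = {p \<in> arcs. fst p \<in> U \<and> shift (snd p) (fst p) \<in> U}"
  have "finite Q"
    by (rule finite_subset[of _ "{..<v} \<times> {..Suc k}"]) (use arcs_bounds in \<open>force simp: Q_def\<close>)+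
  moreover have "{q \<in> edge ` arcs. fst q \<in> U \<and> snd q \<in> U} \<subseteq> edge ` Q"
    unfolding Q_def edge_def by (auto simp: min_def max_def split: if_splits)
  ultimately have "card {q \<in> edge ` arcs. fst q \<in> U \<and> snd q \<in> U} \<le> card Q"
    by (meson card_image_le card_mono finite_imageI le_trans)
  also have "Q \<subseteq> U \<times> {2..k} \<union> {x \<in> U. shift 1 x \<in> U} \<times> {1} \<union> (U \<inter> beatty) \<times> {Suc k}"
    unfolding Q_def arcs_def by (auto simp: not_less_eq_eq)
  hence "card Q \<le> card (U \<times> {2..k} \<union> {x \<in> U. shift 1 x \<in> U} \<times> {1} \<union> (U \<inter> beatty) \<times> {Suc k})"
    by (rule card_mono[rotated]) (simp add: fin)
  also have "\<dots> \<le> card (U \<times> {2..k}) + card ({x \<in> U. shift 1 x \<in> U} \<times> {1::nat})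
                   + card ((U \<inter> beatty) \<times> {Suc k})"
    by (meson card_Un_le add_le_mono1 le_trans)
  finally show ?thesis by (simp add: card_cartesian_product)
qed

lemma balanced_circulant: "balanced (edge ` arcs) v (k * v + r)"
proof -
  have "card {q \<in> edge ` arcs. fst q \<in> U \<and> snd q \<in> U} * v \<le> (k * v + r) * card U"
    if U: "U \<subseteq> {..<v}" for U
  proof -
    have fin: "finite U" using U finite_subset by blast
    have split: "card {x \<in> U. shift 1 x \<in> U} + card {x \<in> U. shift 1 x \<notin> U} = card U"
    proof -
      have "U = {x \<in> U. shift 1 x \<in> U} \<union> {x \<in> U. shift 1 x \<notin> U}" by auto
      thus ?thesis using fin by (metis (no_types, lifting) card_Un_disjoint disjoint_iff finite_Un mem_Collect_eq)
    qed
    have "real (card {q \<in> edge ` arcs. fst q \<in> U \<and> snd q \<in> U})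
            \<le> real (card U) * (real k - 1) + real (card U) + real r * real (card U) / real v"
    proof -
      have "real (card {q \<in> edge ` arcs. fst q \<in> U \<and> snd q \<in> U})
              \<le> real (card U * (k - 1)) + real (card {x \<in> U. shift 1 x \<in> U}) + real (card (U \<inter> beatty))"
        using card_edges_within_le[OF U] by (simp only: of_nat_add[symmetric] of_nat_le_iff)
      moreover have "real (card U * (k - 1)) = real (card U) * (real k - 1)"
        using k_pos by (simp add: of_nat_diff)
      moreover have "real (card {x \<in> U. shift 1 x \<in> U}) + real (card {x \<in> U. shift 1 x \<notin> U}) = real (card U)"
        using split by (simp only: of_nat_add[symmetric])
      ultimately show ?thesis using card_beatty_Int_le[OF U] by linarith
    qed
    hence "real (card {q \<in> edge ` arcs. fst q \<in> U \<and> snd q \<in> U}) * real v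
             \<le> (real k * real v + real r) * real (card U)"
      using k_small by (simp add: field_simps)
    thus ?thesis by (simp flip: of_nat_mult of_nat_add of_nat_le_iff)
  qed
  moreover have "card (edge ` arcs) = k * v + r" using card_image[OF inj_on_edge] card_arcs by simp
  ultimately show ?thesis unfolding balanced_def using edge_arcs_subset by blast
qed

end

lemma balanced_exists:
  assumes "v < e" "e \<le> v * (v - 1) div 2"
  shows "\<exists>T. balanced T v e"
proof (cases "v * (v - 1) div 2 \<le> e + v div 2")
  case True
  thus ?thesis using balanced_exists_dense assms by blast
next
  case False
  define k where "k = e div v"
  define r where "r = e mod v"
  have v: "v > 0" using assms by simp
  have e: "e = k * v + r" unfolding k_def r_def by simp
  have "1 \<le> k" using div_le_mono[of v e v] assms v unfolding k_def by simp
  moreover have "2 * k + 2 < v"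
  proof (rule ccontr)
    assume "\<not> 2 * k + 2 < v"
    have "2 * (v * (v - 1) div 2) = v * (v - 1)" by (cases "even v") auto
    hence lt: "2 * e + 2 * (v div 2) < v * (v - 1)" using False by linarith
    hence "(2 * k + 2) * v < v * v + 1"
      using e by (simp add: algebra_simps diff_mult_distrib2)
    moreover have "v * v \<le> (2 * k + 2) * v" using \<open>\<not> 2 * k + 2 < v\<close> by (intro mult_le_mono1) simp
    ultimately have "v = 2 * k + 2" using v by (metis le_antisym less_Suc_eq_le mult_right_cancel Suc_eq_plus1 not_gr0)
    thus False using lt e by (simp add: algebra_simps)
  qed
  moreover have "r < v" unfolding r_def using v by simp
  ultimately interpret circulant v k r by unfold_locales
  show ?thesis using balanced_circulant e by auto
qed

section \<open>Probability tools\<close>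

context
begin

interpretation pmf_as_function .

text \<open>Needed because \<open>alphapar\<close> need not lie in \<open>[0, 1]\<close> for small \<open>n\<close>.\<close>

lemma pmf_bernoulli_True_clamp: "pmf (bernoulli_pmf p) True = min 1 (max 0 p)"
  by transfer simp

end

lemma integrable_measure_pmf_bounded:
  fixes f :: "'a \<Rightarrow> real"
  assumes "\<And>x. \<bar>f x\<bar> \<le> B"
  shows "integrable (measure_pmf M) f"
  by (rule measure_pmf.integrable_const_bound[where B = B]) (use assms in auto)

lemma prob_bind_pmf:
  "measure_pmf.prob (bind_pmf M N) A = (\<integral>x. measure_pmf.prob (N x) A \<partial>M)"
proof -
  have "ennreal (measure_pmf.prob (bind_pmf M N) A) = emeasure (bind_pmf M N) A"
    by (simp add: measure_pmf.emeasure_eq_measure)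
  also have "\<dots> = (\<integral>\<^sup>+x. emeasure (N x) A \<partial>M)" by simp
  also have "\<dots> = (\<integral>\<^sup>+x. ennreal (measure_pmf.prob (N x) A) \<partial>M)"
    by (simp add: measure_pmf.emeasure_eq_measure)
  also have "\<dots> = ennreal (\<integral>x. measure_pmf.prob (N x) A \<partial>M)"
    by (rule nn_integral_eq_integral) (auto intro!: integrable_measure_pmf_bounded[where B = 1])
  finally show ?thesis by (simp add: integral_nonneg_AE)
qed

lemma prob_Pi_pmf_all_True:
  assumes "finite A" "T \<subseteq> A"
  shows "measure_pmf.prob (Pi_pmf A dflt p) {f. \<forall>x\<in>T. f x} = (\<Prod>x\<in>T. pmf (p x) True)"
proof -
  define B where "B x = (if x \<in> T then {True} else UNIV)" for x
  have "{f. \<forall>x\<in>T. f x} = Pi A B" using assms unfolding B_def Pi_def by auto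
  hence "measure_pmf.prob (Pi_pmf A dflt p) {f. \<forall>x\<in>T. f x} = (\<Prod>x\<in>A. measure_pmf.prob (p x) (B x))"
    using measure_Pi_pmf_Pi[OF assms(1)] by simp
  also have "\<dots> = (\<Prod>x\<in>A. if x \<in> T then pmf (p x) True else 1)"
    unfolding B_def by (intro prod.cong) (auto simp: measure_pmf_single)
  also have "\<dots> = (\<Prod>x\<in>T. pmf (p x) True)"
    using assms by (simp add: prod.If_cases Int_absorb1)
  finally show ?thesis .
qed

lemma prob_none_le_second_moment:
  fixes M :: "'a pmf" and A :: "'i \<Rightarrow> 'a set"
  assumes "finite I" and mu: "\<mu> = (\<Sum>i\<in>I. measure_pmf.prob M (A i))" and "\<mu> > 0"
  shows "measure_pmf.prob M {z. \<forall>i\<in>I. z \<notin> A i}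
           \<le> (\<Sum>i\<in>I. \<Sum>j\<in>I. measure_pmf.prob M (A i \<inter> A j)) / \<mu>\<^sup>2 - 1"
proof -
  define Z where "Z z = (\<Sum>i\<in>I. indicator (A i) z :: real)" for z
  have bound: "\<bar>Z z\<bar> \<le> real (card I)" for z
    unfolding Z_def by (auto intro!: order.trans[OF sum_abs] order.trans[OF sum_bounded_above[where K = 1]])
  have int: "integrable M Z" "integrable M (\<lambda>z. (Z z)\<^sup>2)"
    using bound power_mono[OF bound abs_ge_zero, where n = 2]
    by (auto intro: integrable_measure_pmf_bounded[where B = "real (card I) ^ 2"]
                    integrable_measure_pmf_bounded[where B = "real (card I)"])
  have EZ: "measure_pmf.expectation M Z = \<mu>"
    unfolding Z_def mu by (simp add: integrable_measure_pmf_bounded[where B = 1])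
  have "(\<lambda>z. (Z z)\<^sup>2) = (\<lambda>z. \<Sum>i\<in>I. \<Sum>j\<in>I. indicator (A i \<inter> A j) z)"
    unfolding Z_def power2_eq_square sum_product by (simp add: indicator_inter_arith)
  hence EZ2: "measure_pmf.expectation M (\<lambda>z. (Z z)\<^sup>2) = (\<Sum>i\<in>I. \<Sum>j\<in>I. measure_pmf.prob M (A i \<inter> A j))"
    by (simp add: integrable_measure_pmf_bounded[where B = 1])
  have "{z. \<forall>i\<in>I. z \<notin> A i} \<subseteq> {z \<in> space M. \<mu> \<le> \<bar>Z z - measure_pmf.expectation M Z\<bar>}"
    using \<open>\<mu> > 0\<close> by (auto simp: Z_def EZ)
  hence "measure_pmf.prob M {z. \<forall>i\<in>I. z \<notin> A i}
           \<le> measure_pmf.prob M {z \<in> space M. \<mu> \<le> \<bar>Z z - measure_pmf.expectation M Z\<bar>}"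
    by (rule measure_pmf.finite_measure_mono) simp
  also have "\<dots> \<le> measure_pmf.variance M Z / \<mu>\<^sup>2"
    using int \<open>\<mu> > 0\<close> by (intro measure_pmf.Chebyshev_inequality) simp_all
  also have "measure_pmf.variance M Z = (\<Sum>i\<in>I. \<Sum>j\<in>I. measure_pmf.prob M (A i \<inter> A j)) - \<mu>\<^sup>2"
    using measure_pmf.variance_eq[OF int] EZ EZ2 by simp
  also have "(\<dots>) / \<mu>\<^sup>2 = (\<Sum>i\<in>I. \<Sum>j\<in>I. measure_pmf.prob M (A i \<inter> A j)) / \<mu>\<^sup>2 - 1"
    using \<open>\<mu> > 0\<close> by (simp add: diff_divide_distrib)
  finally show ?thesis .
qed

section \<open>The scan statistic and the type I error\<close>

definition induced_edges :: "nat set \<Rightarrow> (nat \<times> nat \<Rightarrow> bool) \<Rightarrow> (nat \<times> nat) set" where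
  "induced_edges S E = {(i, j). i \<in> S \<and> j \<in> S \<and> i < j \<and> E (i, j)}"

lemma finite_pairs: "finite (pairs n)"
  unfolding pairs_def by (rule finite_subset[of _ "{..<n} \<times> {..<n}"]) auto

lemma finite_induced_edges: "finite S \<Longrightarrow> finite (induced_edges S E)"
  unfolding induced_edges_def by (rule finite_subset[of _ "S \<times> S"]) auto

lemma card_adj_doubletons:
  "card {{i, j} | i j. i \<in> S \<and> j \<in> S \<and> i \<noteq> j \<and> adj E i j} = card (induced_edges S E)"
proof -
  have "{{i, j} | i j. i \<in> S \<and> j \<in> S \<and> i \<noteq> j \<and> adj E i j} = (\<lambda>(i, j). {i, j}) ` induced_edges S E"
  proof (intro equalityI subsetI)
    fix d assume "d \<in> {{i, j} | i j. i \<in> S \<and> j \<in> S \<and> i \<noteq> j \<and> adj E i j}"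
    then obtain i j where d: "d = {i, j}" "i \<in> S" "j \<in> S" "i \<noteq> j" "adj E i j" by blast
    show "d \<in> (\<lambda>(i, j). {i, j}) ` induced_edges S E"
    proof (cases "i < j")
      case True
      thus ?thesis using d unfolding induced_edges_def adj_def by (auto intro!: image_eqI[of _ _ "(i, j)"])
    next
      case False
      hence "j < i" using d by simp
      thus ?thesis using d unfolding induced_edges_def adj_def by (auto intro!: image_eqI[of _ _ "(j, i)"])
    qed
  qed (auto simp: induced_edges_def adj_def)
  moreover have "inj_on (\<lambda>(i, j). {i, j}) (induced_edges S E)"
    by (rule inj_onI) (auto simp: induced_edges_def doubleton_eq_iff)
  ultimately show ?thesis by (simp add: card_image)
qed

lemma est_rejects_iff:
  "est_rejects n v e (adj E) \<longleftrightarrow> (\<exists>S. S \<subseteq> {..<n} \<and> card S \<le> v \<and> e \<le> card (induced_edges S E))"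
proof -
  define F where "F = {S. S \<subseteq> {..<n} \<and> card S \<le> v}"
  have "finite F" unfolding F_def by (rule finite_subset[of _ "Pow {..<n}"]) auto
  moreover have "F \<noteq> {}" unfolding F_def by auto
  moreover have "est_stat n v (adj E) = Max ((\<lambda>S. card (induced_edges S E)) ` F)"
    unfolding est_stat_def F_def card_adj_doubletons by (rule arg_cong[of _ _ Max]) auto
  ultimately have "est_rejects n v e (adj E) \<longleftrightarrow> (\<exists>S\<in>F. e \<le> card (induced_edges S E))"
    unfolding est_rejects_def by (simp add: Max_ge_iff)
  thus ?thesis unfolding F_def by auto
qed

lemma card_subsets_card_le:
  assumes "1 \<le> n"
  shows "card {S. S \<subseteq> {..<n::nat} \<and> card S \<le> v} \<le> (v + 1) * n ^ v"
proof -
  have "{S. S \<subseteq> {..<n} \<and> card S \<le> v} = (\<Union>k\<in>{..v}. {S. S \<subseteq> {..<n} \<and> card S = k})" by auto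
  hence "card {S. S \<subseteq> {..<n} \<and> card S \<le> v} \<le> (\<Sum>k\<in>{..v}. card {S. S \<subseteq> {..<n} \<and> card S = k})"
    by (simp add: card_UN_le)
  also have "\<dots> = (\<Sum>k\<in>{..v}. n choose k)" using n_subsets[of "{..<n}"] by simp
  also have "\<dots> \<le> (\<Sum>k\<in>{..v}. n ^ v)"
  proof (rule sum_mono)
    fix k assume "k \<in> {..v}"
    show "n choose k \<le> n ^ v"
    proof (cases "k \<le> n")
      case True
      hence "n choose k \<le> n ^ k" by (rule binomial_le_pow)
      also have "\<dots> \<le> n ^ v" using \<open>k \<in> {..v}\<close> assms by (intro power_increasing) auto
      finally show ?thesis .
    qed (simp add: binomial_eq_0)
  qed
  finally show ?thesis by simp
qed

lemma card_edge_sets_le: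
  assumes "finite S" "card S \<le> v"
  shows "card {T. T \<subseteq> induced_edges S (\<lambda>_. True) \<and> card T = e} \<le> 2 ^ (v * v)"
proof -
  have "card {T. T \<subseteq> induced_edges S (\<lambda>_. True) \<and> card T = e} \<le> card (Pow (induced_edges S (\<lambda>_. True)))"
    by (rule card_mono) (auto intro: finite_induced_edges assms(1))
  also have "\<dots> = 2 ^ card (induced_edges S (\<lambda>_. True))"
    by (simp add: card_Pow finite_induced_edges assms(1))
  also have "\<dots> \<le> 2 ^ (v * v)"
  proof (rule power_increasing)
    have "card (induced_edges S (\<lambda>_. True)) \<le> card (S \<times> S)"
      by (rule card_mono) (auto simp: induced_edges_def assms(1))
    also have "\<dots> \<le> v * v" using mult_le_mono[OF assms(2) assms(2)] by (simp add: card_cartesian_product)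
    finally show "card (induced_edges S (\<lambda>_. True)) \<le> v * v" .
  qed simp
  finally show ?thesis .
qed

lemma typeI_err_le:
  assumes "1 \<le> n"
  shows "typeI_err \<beta> \<omega> \<delta> v e n
           \<le> real ((v + 1) * n ^ v * 2 ^ (v * v)) * min 1 (max 0 (alphapar \<beta> \<omega> \<delta> n)) ^ e"
proof -
  define p where "p = min 1 (max 0 (alphapar \<beta> \<omega> \<delta> n))"
  define F where "F = {S. S \<subseteq> {..<n} \<and> card S \<le> v}"
  define I where "I = (SIGMA S:F. {T. T \<subseteq> induced_edges S (\<lambda>_. True) \<and> card T = e})"
  define M where "M = null_graph \<beta> \<omega> \<delta> n"
  have fin_F: "finite F" unfolding F_def by (rule finite_subset[of _ "Pow {..<n}"]) auto
  have fin_S: "S \<in> F \<Longrightarrow> finite S" for S unfolding F_def using finite_subset by blast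
  have fin_I: "finite I"
    unfolding I_def using fin_F fin_S by (auto intro: finite_subset[of _ "Pow (induced_edges _ _)"] finite_induced_edges)
  have "{E. est_rejects n v e (adj E)} \<subseteq> (\<Union>i\<in>I. {E. \<forall>ij\<in>snd i. E ij})"
  proof
    fix E assume "E \<in> {E. est_rejects n v e (adj E)}"
    then obtain S where S: "S \<subseteq> {..<n}" "card S \<le> v" "e \<le> card (induced_edges S E)"
      using est_rejects_iff by blast
    then obtain T where T: "T \<subseteq> induced_edges S E" "card T = e"
      by (meson obtain_subset_with_card_n)
    hence "(S, T) \<in> I" unfolding I_def F_def using S by (auto simp: induced_edges_def)
    moreover have "\<forall>ij\<in>T. E ij" using T(1) by (auto simp: induced_edges_def)
    ultimately show "E \<in> (\<Union>i\<in>I. {E. \<forall>ij\<in>snd i. E ij})" by force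
  qed
  hence "typeI_err \<beta> \<omega> \<delta> v e n \<le> measure_pmf.prob M (\<Union>i\<in>I. {E. \<forall>ij\<in>snd i. E ij})"
    unfolding typeI_err_def M_def by (rule measure_pmf.finite_measure_mono) simp
  also have "\<dots> \<le> (\<Sum>i\<in>I. measure_pmf.prob M {E. \<forall>ij\<in>snd i. E ij})"
    by (rule measure_pmf.finite_measure_subadditive_finite[OF fin_I]) simp
  also have "\<dots> = (\<Sum>i\<in>I. p ^ e)"
  proof (rule sum.cong[OF refl])
    fix i assume "i \<in> I"
    then obtain S T where i: "i = (S, T)" "S \<subseteq> {..<n}" "T \<subseteq> induced_edges S (\<lambda>_. True)" "card T = e"
      unfolding I_def F_def by auto
    have "T \<subseteq> pairs n" using i unfolding induced_edges_def pairs_def by auto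
    hence "measure_pmf.prob M {E. \<forall>ij\<in>T. E ij} = (\<Prod>ij\<in>T. pmf (bernoulli_pmf (alphapar \<beta> \<omega> \<delta> n)) True)"
      unfolding M_def null_graph_def by (rule prob_Pi_pmf_all_True[OF finite_pairs])
    thus "measure_pmf.prob M {E. \<forall>ij\<in>snd i. E ij} = p ^ e"
      using i unfolding p_def pmf_bernoulli_True_clamp by simp
  qed
  also have "\<dots> \<le> real ((v + 1) * n ^ v * 2 ^ (v * v)) * p ^ e"
  proof -
    have "card {T. T \<subseteq> induced_edges S (\<lambda>_. True) \<and> card T = e} \<le> 2 ^ (v * v)" if "S \<in> F" for S
      by (rule card_edge_sets_le[OF fin_S[OF that]]) (use that in \<open>simp add: F_def\<close>)
    hence "(\<Sum>S\<in>F. card {T. T \<subseteq> induced_edges S (\<lambda>_. True) \<and> card T = e}) \<le> card F * 2 ^ (v * v)"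
      using sum_mono[of F _ "\<lambda>_. 2 ^ (v * v) :: nat"] by simp
    hence "card I \<le> card F * 2 ^ (v * v)"
      unfolding I_def using fin_F fin_S
      by (subst card_SigmaI) (auto intro: finite_subset[of _ "Pow (induced_edges _ _)"] finite_induced_edges)
    also have "\<dots> \<le> (v + 1) * n ^ v * 2 ^ (v * v)"
      using card_subsets_card_le[OF assms, of v] unfolding F_def by simp
    finally have "real (card I) \<le> real ((v + 1) * n ^ v * 2 ^ (v * v))" by (simp only: of_nat_le_iff)
    thus ?thesis unfolding p_def by (simp add: mult_right_mono)
  qed
  finally show ?thesis unfolding p_def .
qed

section \<open>Planted copies of a balanced graph\<close>

locale block_copies =
  fixes n v m e :: nat and H :: "(nat \<times> nat) set"
  assumes m_pos: "1 \<le> m" and blocks_fit: "v * m \<le> n" and balanced_H: "balanced H v e"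
begin

definition block :: "nat \<Rightarrow> nat set" where
  "block i = {i * m ..< i * m + m}"

definition copies :: "(nat \<Rightarrow> nat) set" where
  "copies = PiE {..<v} block"

definition copy_vertices :: "(nat \<Rightarrow> nat) \<Rightarrow> nat set" where
  "copy_vertices \<phi> = \<phi> ` {..<v}"

definition copy_edges :: "(nat \<Rightarrow> nat) \<Rightarrow> (nat \<times> nat) set" where
  "copy_edges \<phi> = map_prod \<phi> \<phi> ` H"

definition agree :: "(nat \<Rightarrow> nat) \<Rightarrow> (nat \<Rightarrow> nat) \<Rightarrow> nat set" where
  "agree \<phi> \<psi> = {i. i < v \<and> \<phi> i = \<psi> i}"

lemma H_subset: "H \<subseteq> {(x, y). x < y \<and> y < v}"
  and card_H: "card H = e"
  and card_H_within: "U \<subseteq> {..<v} \<Longrightarrow> card {p \<in> H. fst p \<in> U \<and> snd p \<in> U} * v \<le> e * card U"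
  using balanced_H unfolding balanced_def by auto

lemma finite_H: "finite H"
  by (rule finite_subset[OF H_subset], rule finite_subset[of _ "{..<v} \<times> {..<v}"]) auto

lemma card_copies: "card copies = m ^ v"
  unfolding copies_def block_def by (simp add: card_PiE)

lemma copy_bounds: "\<phi> \<in> copies \<Longrightarrow> i < v \<Longrightarrow> i * m \<le> \<phi> i \<and> \<phi> i < Suc i * m"
  using PiE_mem[of \<phi> "{..<v}" block i] unfolding copies_def block_def by auto

lemma copy_less:
  assumes "\<phi> \<in> copies" "i < j" "j < v"
  shows "\<phi> i < \<phi> j"
proof -
  have "\<phi> i < Suc i * m" using copy_bounds assms by simp
  also have "\<dots> \<le> j * m" using assms(2) by (intro mult_le_mono1) simp
  also have "\<dots> \<le> \<phi> j" using copy_bounds assms by simp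
  finally show ?thesis .
qed

lemma copy_less_n:
  assumes "\<phi> \<in> copies" "i < v"
  shows "\<phi> i < n"
proof -
  have "\<phi> i < Suc i * m" using copy_bounds assms by simp
  also have "\<dots> \<le> v * m" using assms(2) by (intro mult_le_mono1) simp
  finally show ?thesis using blocks_fit by simp
qed

lemma copy_eq_imp_eq:
  assumes "\<phi> \<in> copies" "\<psi> \<in> copies" "i < v" "j < v" "\<phi> i = \<psi> j"
  shows "i = j"
proof -
  have "\<phi> i div m = i" "\<psi> j div m = j"
    by (rule div_nat_eqI, use copy_bounds[of \<phi> i] copy_bounds[of \<psi> j] assms in \<open>auto simp: algebra_simps\<close>)+
  thus ?thesis using assms(5) by simp
qed

lemma inj_on_copy: "\<phi> \<in> copies \<Longrightarrow> inj_on \<phi> {..<v}"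
  unfolding inj_on_def using copy_eq_imp_eq by blast

lemma card_copy_vertices: "\<phi> \<in> copies \<Longrightarrow> card (copy_vertices \<phi>) = v"
  unfolding copy_vertices_def using card_image[OF inj_on_copy] by simp

lemma copy_vertices_subset: "\<phi> \<in> copies \<Longrightarrow> copy_vertices \<phi> \<subseteq> {..<n}"
  unfolding copy_vertices_def using copy_less_n by auto

lemma copy_edges_subset: "\<phi> \<in> copies \<Longrightarrow> copy_edges \<phi> \<subseteq> pairs n"
  unfolding copy_edges_def pairs_def using H_subset copy_less copy_less_n by auto

lemma copy_edges_ends: "(i, j) \<in> copy_edges \<phi> \<Longrightarrow> i \<in> copy_vertices \<phi> \<and> j \<in> copy_vertices \<phi>"
  unfolding copy_edges_def copy_vertices_def using H_subset by auto

lemma card_copy_edges: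
  assumes "\<phi> \<in> copies"
  shows "card (copy_edges \<phi>) = e"
proof -
  have "inj_on (map_prod \<phi> \<phi>) ({..<v} \<times> {..<v})"
    using inj_on_copy[OF assms] by (intro map_prod_inj_on)
  hence "inj_on (map_prod \<phi> \<phi>) H" by (rule inj_on_subset) (use H_subset in auto)
  thus ?thesis unfolding copy_edges_def by (simp add: card_image card_H)
qed

lemma card_copy_vertices_Un:
  assumes "\<phi> \<in> copies" "\<psi> \<in> copies"
  shows "card (copy_vertices \<phi> \<union> copy_vertices \<psi>) = 2 * v - card (agree \<phi> \<psi>)"
proof -
  have "copy_vertices \<phi> \<inter> copy_vertices \<psi> = \<phi> ` agree \<phi> \<psi>"
  proof (intro equalityI subsetI)
    fix y assume "y \<in> copy_vertices \<phi> \<inter> copy_vertices \<psi>"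
    then obtain i j where "i < v" "j < v" "y = \<phi> i" "y = \<psi> j" unfolding copy_vertices_def by auto
    moreover from this have "i = j" using copy_eq_imp_eq[OF assms] by simp
    ultimately show "y \<in> \<phi> ` agree \<phi> \<psi>" unfolding agree_def by (intro image_eqI[of _ _ i]) auto
  next
    fix y assume "y \<in> \<phi> ` agree \<phi> \<psi>"
    then obtain i where "i < v" "y = \<phi> i" "y = \<psi> i" unfolding agree_def by auto
    thus "y \<in> copy_vertices \<phi> \<inter> copy_vertices \<psi>"
      unfolding copy_vertices_def by (metis IntI image_eqI lessThan_iff)
  qed
  hence "card (copy_vertices \<phi> \<inter> copy_vertices \<psi>) = card (\<phi> ` agree \<phi> \<psi>)"
    by (rule arg_cong)
  also have "\<dots> = card (agree \<phi> \<psi>)"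
    by (rule card_image, rule inj_on_subset[OF inj_on_copy[OF assms(1)]]) (auto simp: agree_def)
  finally have "card (copy_vertices \<phi> \<inter> copy_vertices \<psi>) = card (agree \<phi> \<psi>)" .
  thus ?thesis
    using card_Un_Int[of "copy_vertices \<phi>" "copy_vertices \<psi>"] card_copy_vertices assms
    by (simp add: copy_vertices_def)
qed

lemma card_copy_edges_Int:
  assumes "\<phi> \<in> copies" "\<psi> \<in> copies"
  shows "card (copy_edges \<phi> \<inter> copy_edges \<psi>) * v \<le> e * card (agree \<phi> \<psi>)"
proof -
  let ?H = "{p \<in> H. fst p \<in> agree \<phi> \<psi> \<and> snd p \<in> agree \<phi> \<psi>}"
  have "copy_edges \<phi> \<inter> copy_edges \<psi> \<subseteq> map_prod \<phi> \<phi> ` ?H"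
  proof
    fix q assume "q \<in> copy_edges \<phi> \<inter> copy_edges \<psi>"
    then obtain x y x' y' where xy: "(x, y) \<in> H" "(x', y') \<in> H" "q = (\<phi> x, \<phi> y)" "q = (\<psi> x', \<psi> y')"
      unfolding copy_edges_def by auto
    have "x < v" "y < v" "x' < v" "y' < v" using xy H_subset by auto
    moreover have "\<phi> x = \<psi> x'" "\<phi> y = \<psi> y'" using xy(3,4) by simp_all
    ultimately have "x = x'" "y = y'" using copy_eq_imp_eq[OF assms] by blast+
    hence "(x, y) \<in> ?H" using xy \<open>x < v\<close> \<open>y < v\<close> unfolding agree_def by simp
    thus "q \<in> map_prod \<phi> \<phi> ` ?H" using xy(3) by (intro image_eqI[of _ _ "(x, y)"]) simp_all
  qed
  moreover have "finite ?H" using finite_H by simp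
  ultimately have "card (copy_edges \<phi> \<inter> copy_edges \<psi>) \<le> card (map_prod \<phi> \<phi> ` ?H)"
    by (intro card_mono finite_imageI)
  also have "\<dots> \<le> card ?H" using \<open>finite ?H\<close> by (rule card_image_le)
  finally have "card (copy_edges \<phi> \<inter> copy_edges \<psi>) * v \<le> card ?H * v" by simp
  also have "\<dots> \<le> e * card (agree \<phi> \<psi>)" by (rule card_H_within) (auto simp: agree_def)
  finally show ?thesis .
qed

lemma card_copy_edges_Un:
  assumes "\<phi> \<in> copies" "\<psi> \<in> copies"
  shows "card (copy_edges \<phi> \<union> copy_edges \<psi>) = 2 * e - card (copy_edges \<phi> \<inter> copy_edges \<psi>)"
  using card_Un_Int[of "copy_edges \<phi>" "copy_edges \<psi>"] card_copy_edges assms finite_H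
  by (simp add: copy_edges_def)

lemma sum_power_card_agree:
  fixes x :: real
  assumes "\<phi> \<in> copies"
  shows "(\<Sum>\<psi>\<in>copies. x ^ card (agree \<phi> \<psi>)) = (x + real m - 1) ^ v"
proof -
  have "(\<Sum>\<psi>\<in>copies. x ^ card (agree \<phi> \<psi>)) = (\<Sum>\<psi>\<in>copies. \<Prod>i<v. if \<phi> i = \<psi> i then x else 1)"
    by (simp add: prod.If_cases agree_def Int_def)
  also have "\<dots> = (\<Prod>i<v. \<Sum>y\<in>block i. if \<phi> i = y then x else 1)"
    unfolding copies_def by (rule prod_sum_PiE[symmetric]) (auto simp: block_def)
  also have "\<dots> = (\<Prod>i<v. x + real m - 1)"
  proof (rule prod.cong[OF refl])
    fix i assume "i \<in> {..<v}"
    hence "\<phi> i \<in> block i" using assms unfolding copies_def by auto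
    hence "{y. y = \<phi> i \<and> y \<in> block i} = {\<phi> i}" "{y \<in> block i. y \<noteq> \<phi> i} = block i - {\<phi> i}"
      and "card (block i - {\<phi> i}) = m - 1"
      by (auto simp: block_def)
    thus "(\<Sum>y\<in>block i. if \<phi> i = y then x else 1) = x + real m - 1"
      using m_pos by (simp add: sum.If_cases of_nat_diff Int_def block_def[of i])
  qed
  finally show ?thesis by simp
qed

end

lemma prob_members_and_edges:
  fixes p :: "(nat \<Rightarrow> bool) \<Rightarrow> nat \<Rightarrow> nat \<Rightarrow> real"
  assumes V: "V \<subseteq> {..<n}" and T: "T \<subseteq> pairs n" and ends: "\<And>i j. (i, j) \<in> T \<Longrightarrow> i \<in> V \<and> j \<in> V"
    and p_community: "\<And>X i j. X i \<Longrightarrow> X j \<Longrightarrow> p X i j = a"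
    and a: "0 \<le> a" "a \<le> 1" and q: "0 \<le> q" "q \<le> 1"
  shows "measure_pmf.prob
      (do { X \<leftarrow> Pi_pmf {..<n} False (\<lambda>_. bernoulli_pmf q);
            map_pmf (\<lambda>E. (X, E)) (Pi_pmf (pairs n) False (\<lambda>(i, j). bernoulli_pmf (p X i j))) })
      {z. (\<forall>y\<in>V. fst z y) \<and> (\<forall>ij\<in>T. snd z ij)} = q ^ card V * a ^ card T"
proof -
  define members where "members = {X :: nat \<Rightarrow> bool. \<forall>y\<in>V. X y}"
  define event where "event = {z :: (nat \<Rightarrow> bool) \<times> (nat \<times> nat \<Rightarrow> bool). (\<forall>y\<in>V. fst z y) \<and> (\<forall>ij\<in>T. snd z ij)}"
  have given_X: "measure_pmf.prob (map_pmf (\<lambda>E. (X, E)) (Pi_pmf (pairs n) False (\<lambda>(i, j). bernoulli_pmf (p X i j))))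
                   event = indicator members X * a ^ card T" for X
  proof (cases "X \<in> members")
    case True
    have "(\<lambda>E. (X, E)) -` event = {E. \<forall>ij\<in>T. E ij}"
      using True unfolding members_def event_def by auto
    hence "measure_pmf.prob (map_pmf (\<lambda>E. (X, E)) (Pi_pmf (pairs n) False (\<lambda>(i, j). bernoulli_pmf (p X i j)))) event
             = measure_pmf.prob (Pi_pmf (pairs n) False (\<lambda>(i, j). bernoulli_pmf (p X i j))) {E. \<forall>ij\<in>T. E ij}"
      by simp
    also have "\<dots> = (\<Prod>ij\<in>T. pmf ((\<lambda>(i, j). bernoulli_pmf (p X i j)) ij) True)"
      by (rule prob_Pi_pmf_all_True[OF finite_pairs T])
    also have "\<dots> = (\<Prod>ij\<in>T. a)"
      using True ends p_community a unfolding members_def by (intro prod.cong) (auto split: prod.splits)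
    finally show ?thesis using True by simp
  next
    case False
    hence "(\<lambda>E. (X, E)) -` event = {}" unfolding members_def event_def by auto
    thus ?thesis using False by simp
  qed
  have "measure_pmf.prob (Pi_pmf {..<n} False (\<lambda>_. bernoulli_pmf q)) members = q ^ card V"
    unfolding members_def using prob_Pi_pmf_all_True[OF _ V] q by simp
  thus ?thesis unfolding prob_bind_pmf given_X event_def[symmetric] by simp
qed

locale planted_copies = block_copies +
  fixes q a :: real and p :: "(nat \<Rightarrow> bool) \<Rightarrow> nat \<Rightarrow> nat \<Rightarrow> real"
  assumes q: "0 < q" "q \<le> 1" and a: "0 < a" "a \<le> 1" and v_pos: "0 < v"
    and p_community: "\<And>X i j. X i \<Longrightarrow> X j \<Longrightarrow> p X i j = a"
begin

definition joint :: "((nat \<Rightarrow> bool) \<times> (nat \<times> nat \<Rightarrow> bool)) pmf" where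
  "joint = do { X \<leftarrow> Pi_pmf {..<n} False (\<lambda>_. bernoulli_pmf q);
               map_pmf (\<lambda>E. (X, E)) (Pi_pmf (pairs n) False (\<lambda>(i, j). bernoulli_pmf (p X i j))) }"

definition planted :: "(nat \<Rightarrow> nat) \<Rightarrow> ((nat \<Rightarrow> bool) \<times> (nat \<times> nat \<Rightarrow> bool)) set" where
  "planted \<phi> = {z. (\<forall>y\<in>copy_vertices \<phi>. fst z y) \<and> (\<forall>ij\<in>copy_edges \<phi>. snd z ij)}"

lemma prob_planted_Int:
  assumes "\<phi> \<in> copies" "\<psi> \<in> copies"
  shows "measure_pmf.prob joint (planted \<phi> \<inter> planted \<psi>)
           = q ^ card (copy_vertices \<phi> \<union> copy_vertices \<psi>) * a ^ card (copy_edges \<phi> \<union> copy_edges \<psi>)"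
proof -
  have "measure_pmf.prob joint (planted \<phi> \<inter> planted \<psi>)
          = measure_pmf.prob joint {z. (\<forall>y\<in>copy_vertices \<phi> \<union> copy_vertices \<psi>. fst z y)
                                       \<and> (\<forall>ij\<in>copy_edges \<phi> \<union> copy_edges \<psi>. snd z ij)}"
    unfolding planted_def by (rule arg_cong) auto
  also have "\<dots> = q ^ card (copy_vertices \<phi> \<union> copy_vertices \<psi>) * a ^ card (copy_edges \<phi> \<union> copy_edges \<psi>)"
    unfolding joint_def
  proof (rule prob_members_and_edges)
    show "copy_vertices \<phi> \<union> copy_vertices \<psi> \<subseteq> {..<n}" "copy_edges \<phi> \<union> copy_edges \<psi> \<subseteq> pairs n"
      using copy_vertices_subset copy_edges_subset assms by auto
  qed (use copy_edges_ends p_community a q in auto)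
  finally show ?thesis .
qed

lemma prob_planted: "\<phi> \<in> copies \<Longrightarrow> measure_pmf.prob joint (planted \<phi>) = q ^ v * a ^ e"
  using prob_planted_Int[of \<phi> \<phi>] card_copy_vertices card_copy_edges by simp

text \<open>Each vertex shared by two copies saves a factor \<open>q\<close> and, by balance, at most \<open>e / v\<close>
  shared edges, i.e. a factor \<open>a^(e / v)\<close>.\<close>

definition overlap_factor :: real where
  "overlap_factor = 1 / q * a powr (- (real e / real v))"

lemma prob_planted_Int_le:
  assumes "\<phi> \<in> copies" "\<psi> \<in> copies"
  shows "measure_pmf.prob joint (planted \<phi> \<inter> planted \<psi>)
           \<le> (q ^ v * a ^ e)\<^sup>2 * overlap_factor ^ card (agree \<phi> \<psi>)"
proof -
  define t where "t = card (agree \<phi> \<psi>)"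
  define j where "j = card (copy_edges \<phi> \<inter> copy_edges \<psi>)"
  have "t \<le> v" unfolding t_def agree_def using card_mono[of "{..<v}" "{i. i < v \<and> \<phi> i = \<psi> i}"] by auto
  have "j \<le> e"
    unfolding j_def using card_copy_edges[OF assms(1)] finite_H
    by (metis card_mono copy_edges_def finite_imageI inf_le1)
  have "real j \<le> real e * real t / real v"
    using card_copy_edges_Int[OF assms] v_pos unfolding j_def t_def
    by (simp add: field_simps) (metis of_nat_le_iff of_nat_mult)
  hence "a powr (real e * real t / real v) \<le> a ^ j"
    using a by (simp add: powr_mono' flip: powr_realpow)
  hence "1 / a ^ j \<le> 1 / a powr (real e * real t / real v)"
    using a by (intro divide_left_mono) auto
  also have "\<dots> = (a powr (- (real e / real v))) ^ t"
    using a by (simp add: powr_minus_divide powr_realpow[symmetric] powr_powr field_simps)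
  finally have saved_edges: "1 / a ^ j \<le> (a powr (- (real e / real v))) ^ t" .
  have "measure_pmf.prob joint (planted \<phi> \<inter> planted \<psi>) = q ^ (2 * v - t) * a ^ (2 * e - j)"
    using prob_planted_Int[OF assms] card_copy_vertices_Un[OF assms] card_copy_edges_Un[OF assms]
    unfolding t_def j_def by simp
  also have "\<dots> = q ^ (2 * v) * (1 / q) ^ t * (a ^ (2 * e) * (1 / a ^ j))"
    using \<open>t \<le> v\<close> \<open>j \<le> e\<close> q a by (simp add: power_diff power_one_over field_simps)
  also have "\<dots> \<le> q ^ (2 * v) * (1 / q) ^ t * (a ^ (2 * e) * (a powr (- (real e / real v))) ^ t)"
    using saved_edges q a by (intro mult_left_mono) auto
  also have "\<dots> = (q ^ v * a ^ e)\<^sup>2 * overlap_factor ^ t"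
  proof -
    have "overlap_factor ^ t = (1 / q) ^ t * (a powr (- (real e / real v))) ^ t"
      unfolding overlap_factor_def by (simp only: power_mult_distrib)
    moreover have "(q ^ v * a ^ e)\<^sup>2 = q ^ (2 * v) * a ^ (2 * e)"
      by (simp add: power_mult_distrib power_mult[symmetric] mult.commute)
    ultimately show ?thesis by (simp add: algebra_simps)
  qed
  finally show ?thesis unfolding t_def .
qed

lemma prob_no_planted_le:
  "measure_pmf.prob joint {z. \<forall>\<phi>\<in>copies. z \<notin> planted \<phi>} \<le> ((overlap_factor + real m - 1) / real m) ^ v - 1"
proof -
  define \<mu>\<^sub>0 where "\<mu>\<^sub>0 = q ^ v * a ^ e"
  define \<mu> where "\<mu> = (\<Sum>\<phi>\<in>copies. measure_pmf.prob joint (planted \<phi>))"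
  have "\<mu>\<^sub>0 > 0" unfolding \<mu>\<^sub>0_def using q a by simp
  have fin: "finite copies" unfolding copies_def block_def by (simp add: finite_PiE)
  have \<mu>: "\<mu> = real m ^ v * \<mu>\<^sub>0" unfolding \<mu>_def \<mu>\<^sub>0_def using prob_planted card_copies by simp
  hence "\<mu> > 0" using \<open>\<mu>\<^sub>0 > 0\<close> m_pos by simp
  have "(\<Sum>\<phi>\<in>copies. \<Sum>\<psi>\<in>copies. measure_pmf.prob joint (planted \<phi> \<inter> planted \<psi>))
          \<le> (\<Sum>\<phi>\<in>copies. \<Sum>\<psi>\<in>copies. \<mu>\<^sub>0\<^sup>2 * overlap_factor ^ card (agree \<phi> \<psi>))"
    by (intro sum_mono) (use prob_planted_Int_le \<mu>\<^sub>0_def in auto)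
  also have "\<dots> = real m ^ v * \<mu>\<^sub>0\<^sup>2 * (overlap_factor + real m - 1) ^ v"
    by (simp add: sum_distrib_left[symmetric] sum_power_card_agree card_copies)
  finally have "measure_pmf.prob joint {z. \<forall>\<phi>\<in>copies. z \<notin> planted \<phi>}
                  \<le> real m ^ v * \<mu>\<^sub>0\<^sup>2 * (overlap_factor + real m - 1) ^ v / \<mu>\<^sup>2 - 1"
    using prob_none_le_second_moment[OF fin \<mu>_def \<open>\<mu> > 0\<close>] \<open>\<mu> > 0\<close>
    by (smt (verit) divide_right_mono zero_le_power2)
  also have "real m ^ v * \<mu>\<^sub>0\<^sup>2 * (overlap_factor + real m - 1) ^ v / \<mu>\<^sup>2
               = ((overlap_factor + real m - 1) / real m) ^ v"
    unfolding \<mu> using \<open>\<mu>\<^sub>0 > 0\<close> m_pos by (simp add: power_divide power2_eq_square field_simps)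
  finally show ?thesis .
qed

lemma planted_imp_rejects:
  assumes "\<phi> \<in> copies" "z \<in> planted \<phi>"
  shows "est_rejects n v e (adj (snd z))"
  unfolding est_rejects_iff
proof (intro exI conjI)
  show "copy_vertices \<phi> \<subseteq> {..<n}" "card (copy_vertices \<phi>) \<le> v"
    using copy_vertices_subset card_copy_vertices assms by auto
  have "copy_edges \<phi> \<subseteq> induced_edges (copy_vertices \<phi>) (snd z)"
    using copy_edges_subset[OF assms(1)] copy_edges_ends assms(2)
    unfolding induced_edges_def planted_def pairs_def by auto
  moreover have "finite (induced_edges (copy_vertices \<phi>) (snd z))"
    by (rule finite_induced_edges) (simp add: copy_vertices_def)
  ultimately show "e \<le> card (induced_edges (copy_vertices \<phi>) (snd z))"
    using card_mono card_copy_edges[OF assms(1)] by metis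
qed

lemma prob_not_rejects_le:
  "measure_pmf.prob (map_pmf snd joint) {E. \<not> est_rejects n v e (adj E)}
     \<le> ((overlap_factor + real m - 1) / real m) ^ v - 1"
proof -
  have "measure_pmf.prob (map_pmf snd joint) {E. \<not> est_rejects n v e (adj E)}
          \<le> measure_pmf.prob joint {z. \<forall>\<phi>\<in>copies. z \<notin> planted \<phi>}"
    using planted_imp_rejects by (auto intro!: measure_pmf.finite_measure_mono)
  also have "\<dots> \<le> ((overlap_factor + real m - 1) / real m) ^ v - 1" by (rule prob_no_planted_le)
  finally show ?thesis .
qed

end

section \<open>Asymptotics\<close>

lemma alphapar_le:
  assumes "1 \<le> n" and N: "Npar \<beta> n \<le> real n / 4"
  shows "alphapar \<beta> \<omega> \<delta> n \<le> 2 * cpar \<delta> n"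
proof -
  define N a c where "N = Npar \<beta> n" and "a = apar \<omega> n" and "c = cpar \<delta> n"
  have pos: "real n > 0" "0 \<le> N" "0 \<le> a" "0 \<le> c"
    using assms unfolding N_def a_def c_def Npar_def apar_def cpar_def by auto
  have D: "real n - 2 * N \<ge> real n / 2" using N unfolding N_def by simp
  have "alphapar \<beta> \<omega> \<delta> n = (c * (real n - N)\<^sup>2 - a * N\<^sup>2) / (real n * (real n - 2 * N))"
    unfolding alphapar_def bpar_def N_def[symmetric] a_def[symmetric] c_def[symmetric]
    using pos D by (simp add: field_simps power2_eq_square)
  also have "\<dots> \<le> (c * (real n)\<^sup>2) / (real n * (real n / 2))"
  proof (rule frac_le)
    have "c * (real n - N)\<^sup>2 \<le> c * (real n)\<^sup>2"
      using N pos unfolding N_def by (intro mult_left_mono power_mono) auto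
    moreover have "0 \<le> a * N\<^sup>2" using pos by simp
    ultimately show "c * (real n - N)\<^sup>2 - a * N\<^sup>2 \<le> c * (real n)\<^sup>2" by linarith
  qed (use pos D in auto)
  also have "\<dots> = 2 * c" using pos by (simp add: power2_eq_square field_simps)
  finally show ?thesis unfolding c_def .
qed

lemma tendsto_real_powr_neg: "s < 0 \<Longrightarrow> (\<lambda>n::nat. real n powr s) \<longlonglongrightarrow> 0"
  by (rule tendsto_neg_powr) (auto simp: filterlim_real_sequentially)

lemma eventually_Npar_le:
  assumes "0 < \<beta>"
  shows "eventually (\<lambda>n. Npar \<beta> n \<le> real n / 4) sequentially"
proof -
  have "(\<lambda>n. real n powr (- \<beta>)) \<longlonglongrightarrow> 0" by (rule tendsto_real_powr_neg) (use assms in simp)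
  hence "eventually (\<lambda>n. real n powr (- \<beta>) < 1 / 4) sequentially" by (rule order_tendstoD) simp
  thus ?thesis using eventually_ge_at_top[of 1]
  proof eventually_elim
    case (elim n)
    hence "real n > 0" by simp
    hence "Npar \<beta> n = real n * real n powr (- \<beta>)"
      unfolding Npar_def by (simp add: powr_diff powr_minus divide_inverse)
    thus ?case using elim by simp
  qed
qed

lemma typeI_err_tendsto_zero:
  assumes "0 < \<beta>" and "real v < \<delta> * real e"
  shows "typeI_err \<beta> \<omega> \<delta> v e \<longlonglongrightarrow> 0"
proof (rule tendsto_sandwich[OF _ _ tendsto_const])
  define C where "C = real ((v + 1) * 2 ^ (v * v)) * 2 ^ e"
  show "eventually (\<lambda>n. 0 \<le> typeI_err \<beta> \<omega> \<delta> v e n) sequentially"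
    by (simp add: typeI_err_def)
  show "eventually (\<lambda>n. typeI_err \<beta> \<omega> \<delta> v e n \<le> C * real n powr (real v - \<delta> * real e)) sequentially"
    using eventually_Npar_le[OF assms(1)] eventually_ge_at_top[of 1]
  proof eventually_elim
    case (elim n)
    have "min 1 (max 0 (alphapar \<beta> \<omega> \<delta> n)) \<le> 2 * real n powr (- \<delta>)"
      using alphapar_le[OF elim(2,1), of \<omega> \<delta>] powr_ge_zero[of "real n" "- \<delta>"]
      unfolding cpar_def by (auto simp: min_def max_def)
    hence "min 1 (max 0 (alphapar \<beta> \<omega> \<delta> n)) ^ e \<le> (2 * real n powr (- \<delta>)) ^ e"
      by (intro power_mono) auto
    hence "typeI_err \<beta> \<omega> \<delta> v e n \<le> real ((v + 1) * n ^ v * 2 ^ (v * v)) * (2 * real n powr (- \<delta>)) ^ e"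
      using typeI_err_le[OF elim(2), of \<beta> \<omega> \<delta> v e] by (meson mult_left_mono of_nat_0_le_iff order_trans)
    also have "\<dots> = C * (real n ^ v * (real n powr (- \<delta>)) ^ e)"
      unfolding C_def by (simp add: power_mult_distrib algebra_simps)
    also have "real n ^ v * (real n powr (- \<delta>)) ^ e = real n powr (real v - \<delta> * real e)"
    proof -
      have "(real n powr (- \<delta>)) ^ e = real n powr (- \<delta> * real e)"
        using elim by (simp add: powr_powr flip: powr_realpow)
      thus ?thesis using elim by (simp add: powr_add[symmetric] powr_realpow[symmetric])
    qed
    finally show ?case .
  qed
  have "(\<lambda>n. C * real n powr (real v - \<delta> * real e)) \<longlonglongrightarrow> C * 0"
    using assms(2) by (intro tendsto_mult tendsto_const tendsto_real_powr_neg) simp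
  thus "(\<lambda>n. C * real n powr (real v - \<delta> * real e)) \<longlonglongrightarrow> 0" by simp
qed

lemma typeII_err_le:
  assumes "0 < v" "2 * v \<le> n" "balanced H v e" "0 < \<beta>" "0 < \<omega>"
  shows "typeII_err \<beta> \<omega> \<delta> v e n
           \<le> ((real n powr (\<beta> + \<omega> * real e / real v) + real (n div v) - 1) / real (n div v)) ^ v - 1"
proof -
  have n: "real n \<ge> 1" using assms by simp
  interpret planted_copies n v "n div v" e H "real n powr (- \<beta>)" "real n powr (- \<omega>)" "edge_prob \<beta> \<omega> \<delta> n"
  proof
    have "0 < n div v" using assms by (simp add: div_greater_zero_iff)
    thus "1 \<le> n div v" by simp
    show "real n powr - \<beta> \<le> 1" "real n powr - \<omega> \<le> 1"
      using n assms by (simp_all add: powr_minus_divide ge_one_powr_ge_zero)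
    show "edge_prob \<beta> \<omega> \<delta> n X i j = real n powr - \<omega>" if "X i" "X j" for X i j
      using that unfolding edge_prob_def apar_def by simp
  qed (use assms n in auto)
  have "Npar \<beta> n / real n = real n powr (- \<beta>)"
    unfolding Npar_def using n by (simp add: powr_diff powr_minus_divide)
  hence "alt_graph \<beta> \<omega> \<delta> n = map_pmf snd joint"
    unfolding alt_graph_def joint_def by (simp add: map_bind_pmf map_pmf_comp)
  moreover have "overlap_factor = real n powr (\<beta> + \<omega> * real e / real v)"
  proof -
    have "(real n powr - \<omega>) powr (- (real e / real v)) = real n powr (\<omega> * real e / real v)"
      by (simp add: powr_powr)
    moreover have "1 / real n powr - \<beta> = real n powr \<beta>" by (simp add: powr_minus divide_inverse)
    ultimately show ?thesis unfolding overlap_factor_def by (simp add: powr_add)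
  qed
  ultimately show ?thesis unfolding typeII_err_def using prob_not_rejects_le by simp
qed

lemma real_div_ge_half:
  assumes "0 < v" "2 * v \<le> n"
  shows "real (n div v) \<ge> real n / (2 * real v)"
proof -
  have "real n = real v * real (n div v) + real (n mod v)"
    by (metis div_mult_mod_eq of_nat_add of_nat_mult mult.commute)
  moreover have "real (n mod v) < real v" using assms by simp
  ultimately have "real (n div v) \<ge> real n / real v - 1" using assms by (simp add: field_simps)
  moreover have "real n / real v - 1 \<ge> real n / (2 * real v)" using assms by (simp add: field_simps)
  ultimately show ?thesis by linarith
qed

lemma tendsto_block_ratio:
  assumes "0 < v" and "0 \<le> s" and "s < 1"
  shows "(\<lambda>n. ((real n powr s + real (n div v) - 1) / real (n div v)) ^ v - 1) \<longlonglongrightarrow> 0"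
proof -
  define y where "y n = (real n powr s - 1) / real (n div v)" for n :: nat
  have "y \<longlonglongrightarrow> 0"
  proof (rule tendsto_sandwich[of "\<lambda>_. 0" _ _ "\<lambda>n. 2 * real v * real n powr (s - 1)"])
    show "eventually (\<lambda>n. 0 \<le> y n) sequentially"
      using eventually_ge_at_top[of 1]
      by eventually_elim (use assms in \<open>simp add: y_def ge_one_powr_ge_zero\<close>)
    show "eventually (\<lambda>n. y n \<le> 2 * real v * real n powr (s - 1)) sequentially"
      using eventually_ge_at_top[of "2 * v"]
    proof eventually_elim
      case (elim n)
      have m: "real (n div v) \<ge> real n / (2 * real v)" using assms(1) elim by (rule real_div_ge_half)
      have pos: "real n / (2 * real v) > 0" using elim assms by simp
      have "y n \<le> real n powr s / real (n div v)"
        unfolding y_def using pos m by (intro divide_right_mono) auto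
      also have "\<dots> \<le> real n powr s / (real n / (2 * real v))"
      proof (rule divide_left_mono)
        have "0 < real (n div v)" using pos m by linarith
        thus "0 < real (n div v) * (real n / (2 * real v))" using pos by (rule mult_pos_pos)
      qed (use m in simp_all)
      also have "\<dots> = 2 * real v * real n powr (s - 1)"
        using pos assms by (simp add: powr_diff field_simps)
      finally show ?case .
    qed
    have "(\<lambda>n. 2 * real v * real n powr (s - 1)) \<longlonglongrightarrow> 2 * real v * 0"
      using assms by (intro tendsto_mult tendsto_const tendsto_real_powr_neg) simp
    thus "(\<lambda>n. 2 * real v * real n powr (s - 1)) \<longlonglongrightarrow> 0" by simp
  qed simp
  hence "(\<lambda>n. (1 + y n) ^ v - 1) \<longlonglongrightarrow> (1 + 0) ^ v - 1"
    by (intro tendsto_diff tendsto_power tendsto_add tendsto_const)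
  moreover have "eventually (\<lambda>n. (1 + y n) ^ v - 1
                   = ((real n powr s + real (n div v) - 1) / real (n div v)) ^ v - 1) sequentially"
    using eventually_ge_at_top[of v]
    by eventually_elim (use assms in \<open>simp add: y_def field_simps div_greater_zero_iff\<close>)
  ultimately show ?thesis by (simp add: Lim_transform_eventually)
qed

lemma typeII_err_tendsto_zero:
  assumes "0 < \<beta>" "0 < \<omega>" "\<beta> + \<omega> * real e / real v < 1" "v < e" "e \<le> v * (v - 1) div 2"
  shows "typeII_err \<beta> \<omega> \<delta> v e \<longlonglongrightarrow> 0"
proof (rule tendsto_sandwich[OF _ _ tendsto_const])
  obtain H where H: "balanced H v e" using balanced_exists assms(4,5) by blast
  have "0 < v" using assms by (cases v) auto
  show "eventually (\<lambda>n. 0 \<le> typeII_err \<beta> \<omega> \<delta> v e n) sequentially"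
    by (simp add: typeII_err_def)
  show "eventually (\<lambda>n. typeII_err \<beta> \<omega> \<delta> v e n \<le> ((real n powr (\<beta> + \<omega> * real e / real v)
          + real (n div v) - 1) / real (n div v)) ^ v - 1) sequentially"
    using eventually_ge_at_top[of "2 * v"]
    by eventually_elim (rule typeII_err_le[OF \<open>0 < v\<close> _ H assms(1,2)])
  show "(\<lambda>n. ((real n powr (\<beta> + \<omega> * real e / real v) + real (n div v) - 1) / real (n div v)) ^ v - 1)
          \<longlonglongrightarrow> 0"
    using assms \<open>0 < v\<close> by (intro tendsto_block_ratio) auto
qed

theorem theorem7:
  fixes \<beta> \<omega> \<delta> :: real and v e :: nat
  assumes "1/2 \<le> \<beta>" and "\<beta> < 1"
    and "0 < \<omega>" and "\<omega> < \<delta>" and "\<delta> < 1"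
    and "\<omega> / (1 - \<beta>) < \<delta>"
    and "0 < v" and "0 < e" and "e \<le> v * (v - 1) div 2"
    and "\<omega> / (1 - \<beta>) < real v / real e" and "real v / real e < \<delta>"
  shows "(\<lambda>n. typeI_err \<beta> \<omega> \<delta> v e n + typeII_err \<beta> \<omega> \<delta> v e n) \<longlonglongrightarrow> 0"
proof -
  have "real v < \<delta> * real e" using assms(8,11) by (simp add: divide_less_eq)
  moreover have "v < e"
  proof -
    have "\<delta> * real e < real e" using assms(5,8) by simp
    thus ?thesis using \<open>real v < \<delta> * real e\<close> by linarith
  qed
  moreover have "\<beta> + \<omega> * real e / real v < 1"
    using assms(2,7,8,10) by (simp add: field_simps)
  ultimately have "(\<lambda>n. typeI_err \<beta> \<omega> \<delta> v e n + typeII_err \<beta> \<omega> \<delta> v e n) \<longlonglongrightarrow> 0 + 0"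
    using assms(1,3,9) by (intro tendsto_add typeI_err_tendsto_zero typeII_err_tendsto_zero) auto
  thus ?thesis by simp
qed

end
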